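(* For all $i,j\in\mathbb{Z}$ with $i\neq j$, the linear orders $L_i$ and $L_j$ are not isomorphic. Moreover, each $L_i$ is scattered (contains no dense suborder).
   Context: Ordinal exponents have their usual ordinal meaning: $\omega^n$ is the ordinal $\omega^n$ for $n\in\omega$, and $\omega^\omega=\sup_{n<\omega}\omega^n$. For a positive integer $k$ and an order $Z$, $kZ$ denotes $k$ consecutive copies of $Z$. Given orders $M_k$ ($k\ge 1$), the sum $\cdots+M_3+M_2+M_1$ denotes the $\omega^*$-indexed ordered sum, in which $M_{k+1}$ lies entirely to the left of $M_k$. For $n\ge 0$ define \[ L_n=\cdots+3\omega^{n+3}+2\omega^{n+2}+\omega^{n+1}+\omega^\omega, \] i.e. the $\omega^*$-sum whose $k$-th summand from the right ($k\ge1$) is $k\,\omega^{n+k}$, followed on the far right by $\omega^\omega$. For $n\ge1$ define \[ L_{-n}=\cdots+(n+3)\omega^{3}+(n+2)\omega^{2}+(n+1)\omega+\omega^\omega, \] i.e. the $\omega^*$-sum whose $k$-th summand from the right ($k\ge1$) is $(n+k)\,\omega^{k}$, followed on the far right by $\omega^\omega$. An order is dense if it is infinite and between any two points there is a third; an order is scattered if it contains no dense suborder. *)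

theory Defs
  imports Main
begin

text \<open>Lexicographic strict order on lists (used on lists of equal length m,
  which represent the ordinal omega^m in Cantor normal form, most significant digit first).\<close>
definition lexless :: "nat list \<Rightarrow> nat list \<Rightarrow> bool" where
  "lexless xs ys \<longleftrightarrow>
     (\<exists>j. j < length xs \<and> j < length ys \<and> take j xs = take j ys \<and> xs ! j < ys ! j)"

type_synonym Lpt = "(nat \<times> nat \<times> nat list) + (nat \<times> nat list)"

text \<open>Inl (k, c, xs): a point of the c-th copy (c < mult k)
  of omega^(ex k) in the k-th summand from the right (k \<ge> 1), where
  mult k = nat(-i) + k and ex k = nat i + k; so for i = n \<ge> 0 the summand is k omega^(n+k),
  and for i = -n < 0 it is (n+k) omega^k.  Inr (m, xs) with length xs = m: a point of
  omega^omega = omega^0 + omega^1 + omega^2 + ... .\<close>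
definition Lcarrier :: "int \<Rightarrow> Lpt set" where
  "Lcarrier i =
     {Inl (k, c, xs) | k c xs. 1 \<le> k \<and> c < nat (- i) + k \<and> length xs = nat i + k}
     \<union> {Inr (m, xs) | m xs. length xs = m}"

text \<open>Strict order: omega^*-indexed sum (summand k+1 left of summand k), followed by omega^omega.\<close>
fun Lless :: "Lpt \<Rightarrow> Lpt \<Rightarrow> bool" where
  "Lless (Inl (k, c, xs)) (Inl (k', c', xs')) \<longleftrightarrow>
     k' < k \<or> (k = k' \<and> (c < c' \<or> (c = c' \<and> lexless xs xs')))"
| "Lless (Inl _) (Inr _) \<longleftrightarrow> True"
| "Lless (Inr _) (Inl _) \<longleftrightarrow> False"
| "Lless (Inr (m, xs)) (Inr (m', xs')) \<longleftrightarrow> m < m' \<or> (m = m' \<and> lexless xs xs')"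

definition order_iso :: "'a set \<Rightarrow> ('a \<Rightarrow> 'a \<Rightarrow> bool) \<Rightarrow> 'b set \<Rightarrow> ('b \<Rightarrow> 'b \<Rightarrow> bool) \<Rightarrow> bool" where
  "order_iso A r B s \<longleftrightarrow>
     (\<exists>f. bij_betw f A B \<and> (\<forall>x\<in>A. \<forall>y\<in>A. r x y \<longleftrightarrow> s (f x) (f y)))"

definition dense_suborder :: "'a set \<Rightarrow> ('a \<Rightarrow> 'a \<Rightarrow> bool) \<Rightarrow> bool" where
  "dense_suborder S r \<longleftrightarrow> infinite S \<and> (\<forall>x\<in>S. \<forall>y\<in>S. r x y \<longrightarrow> (\<exists>z\<in>S. r x z \<and> r z y))"

definition scattered :: "'a set \<Rightarrow> ('a \<Rightarrow> 'a \<Rightarrow> bool) \<Rightarrow> bool" where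
  "scattered A r \<longleftrightarrow> \<not> (\<exists>S\<subseteq>A. dense_suborder S r)"

end

theory Submission
  imports Defs
begin

text \<open>The order above any point of \<open>L\<^sub>i\<close> is well-founded: the points above it embed into a
  lexicographic product of copies of \<open>\<nat>\<close> and of lists under the length-lexicographic order.
  A dense suborder has no least element above any of its points, so \<open>L\<^sub>i\<close> is scattered.

  For non-isomorphism, call \<open>x\<close> a left limit of degree \<open>d + 1\<close> if every left neighbourhood
  of \<open>x\<close> contains infinitely many left limits of degree \<open>d\<close>; this is invariant under
  isomorphisms. Every point of \<open>L\<^sub>i\<close> is the supremum of a copy of some \<open>\<omega>\<^sup>e\<close> lying immediately
  to its left, and its exact degree is this \<open>e\<close>. Hence, for any point \<open>y\<close> and all large
  \<open>D\<close>, the points of degree \<open>D\<close> below \<open>y\<close> with no point of degree \<open>D + 1\<close> between them and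
  \<open>y\<close> are the left ends of the copies of \<open>\<omega>\<^sup>D\<close> in one summand together with the left end of
  the summand to their right: there are \<open>D + 1 - i\<close> of them, which determines \<open>i\<close>.\<close>

lemma lexless_Nil_left [simp]: "\<not> lexless [] ys"
  by (simp add: lexless_def)

lemma lexless_Nil_right [simp]: "\<not> lexless xs []"
  by (simp add: lexless_def)

lemma lexless_Cons [simp]:
  "lexless (x # xs) (y # ys) \<longleftrightarrow> x < y \<or> (x = y \<and> lexless xs ys)"
proof
  assume "lexless (x # xs) (y # ys)"
  then obtain j where j: "j < length (x # xs)" "j < length (y # ys)"
    "take j (x # xs) = take j (y # ys)" "(x # xs) ! j < (y # ys) ! j"
    unfolding lexless_def by blast
  then show "x < y \<or> (x = y \<and> lexless xs ys)"
    unfolding lexless_def by (cases j) auto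
next
  assume "x < y \<or> (x = y \<and> lexless xs ys)"
  then show "lexless (x # xs) (y # ys)"
  proof
    assume "x < y"
    then show ?thesis unfolding lexless_def by (intro exI[of _ 0]) auto
  next
    assume "x = y \<and> lexless xs ys"
    then obtain j where "x = y" "j < length xs" "j < length ys" "take j xs = take j ys" "xs ! j < ys ! j"
      unfolding lexless_def by blast
    then show ?thesis unfolding lexless_def by (intro exI[of _ "Suc j"]) auto
  qed
qed

lemma lexless_total:
  "length xs = length ys \<Longrightarrow> xs \<noteq> ys \<Longrightarrow> lexless xs ys \<or> lexless ys xs"
proof (induction xs arbitrary: ys)
  case (Cons x xs) then show ?case by (cases ys) auto
qed simp

lemma lexless_imp_lex:
  "lexless xs ys \<Longrightarrow> length xs = length ys \<Longrightarrow> (xs, ys) \<in> lex less_than"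
proof (induction xs arbitrary: ys)
  case (Cons x xs) then show ?case by (cases ys) auto
qed simp

lemma lexless_asym: "lexless xs ys \<Longrightarrow> \<not> lexless ys xs"
proof (induction xs arbitrary: ys)
  case (Cons x xs) then show ?case by (cases ys) auto
qed simp

lemma lexless_append_same [simp]: "lexless (pre @ xs) (pre @ ys) \<longleftrightarrow> lexless xs ys"
  by (induction pre) auto

lemma lexless_append_Cons: "a < b \<Longrightarrow> lexless (pre @ a # xs) (pre @ b # ys)"
  by (induction pre) auto

definition all_zero :: "nat list \<Rightarrow> bool" where
  "all_zero xs \<longleftrightarrow> (\<forall>x\<in>set xs. x = 0)"

lemma all_zero_Nil [simp]: "all_zero []"
  and all_zero_Cons [simp]: "all_zero (x # xs) \<longleftrightarrow> x = 0 \<and> all_zero xs"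
  and all_zero_replicate [simp]: "all_zero (replicate n 0)"
  and all_zero_append [simp]: "all_zero (xs @ ys) \<longleftrightarrow> all_zero xs \<and> all_zero ys"
  by (auto simp: all_zero_def)

lemma all_zero_eq_replicate: "all_zero xs \<Longrightarrow> xs = replicate (length xs) 0"
  by (simp add: all_zero_def replicate_length_same)

lemma lexless_imp_not_all_zero: "lexless xs ys \<Longrightarrow> \<not> all_zero ys"
proof (induction xs arbitrary: ys)
  case (Cons x xs) then show ?case by (cases ys) auto
qed simp

lemma not_lexless_all_zero [simp]: "all_zero ys \<Longrightarrow> \<not> lexless xs ys"
  using lexless_imp_not_all_zero by blast

lemma not_all_zero_decomp:
  assumes "\<not> all_zero xs"
  obtains pre v t where "xs = pre @ v # replicate t 0" "v \<noteq> 0"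
  using assms
proof (induction xs arbitrary: thesis rule: rev_induct)
  case Nil then show ?case by simp
next
  case (snoc x xs)
  show ?case
  proof (cases "x = 0")
    case False
    then show ?thesis using snoc.prems(1)[of xs x 0] by simp
  next
    case True
    then have "\<not> all_zero xs" using snoc.prems(2) by (simp add: all_zero_def)
    then obtain pre v t where "xs = pre @ v # replicate t 0" "v \<noteq> 0" using snoc.IH by blast
    then show ?thesis
      using True snoc.prems(1)[of pre v "Suc t"] by (simp add: replicate_append_same[symmetric])
  qed
qed

definition trailing_zeros :: "nat list \<Rightarrow> nat" where
  "trailing_zeros xs = length (takeWhile (\<lambda>x. x = 0) (rev xs))"

lemma trailing_zeros_append_Cons_replicate:
  "v \<noteq> 0 \<Longrightarrow> trailing_zeros (pre @ v # replicate t 0) = t"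
  by (simp add: trailing_zeros_def takeWhile_append)

lemma trailing_zeros_append_Cons:
  "\<not> all_zero ys \<Longrightarrow> trailing_zeros (pre @ a # ys) = trailing_zeros ys"
  by (auto simp: trailing_zeros_def all_zero_def)

lemma trailing_zeros_less_length: "\<not> all_zero xs \<Longrightarrow> trailing_zeros xs < length xs"
  by (elim not_all_zero_decomp) (simp add: trailing_zeros_append_Cons_replicate)

lemma lexless_below_Suc_cases:
  assumes "lexless ws (pre @ Suc a # replicate t 0)" "length ws = length pre + Suc t"
  shows "(\<exists>ys. length ys = t \<and> ws = pre @ a # ys) \<or> (\<forall>ys. lexless ws (pre @ a # ys))"
  using assms
proof (induction pre arbitrary: ws)
  case Nil
  then obtain w W where "ws = w # W" "length W = t" "w \<le> a" by (cases ws) auto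
  then show ?case by (cases "w = a") auto
next
  case (Cons p P)
  then obtain w W where "ws = w # W" by (cases ws) auto
  then show ?case using Cons by (cases "w = p") auto
qed

lemma eventually_lexless_Suc_Cons:
  "zs \<noteq> [] \<Longrightarrow> \<forall>\<^sub>F n in sequentially. lexless zs (Suc n # ys)"
  by (cases zs) (auto intro!: eventually_sequentiallyI[of "hd zs"])

lemma bij_betw_image_Collect:
  assumes "bij_betw f A B" "\<And>w. w \<in> A \<Longrightarrow> P w \<longleftrightarrow> Q (f w)"
  shows "f ` {w\<in>A. P w} = {w\<in>B. Q w}"
  using assms by (auto simp: bij_betw_def)

fun limit_degree_ge :: "'a set \<Rightarrow> ('a \<Rightarrow> 'a \<Rightarrow> bool) \<Rightarrow> nat \<Rightarrow> 'a \<Rightarrow> bool" where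
  "limit_degree_ge A r 0 x = True"
| "limit_degree_ge A r (Suc d) x \<longleftrightarrow>
     (\<forall>z\<in>A. r z x \<longrightarrow> infinite {w\<in>A. r z w \<and> r w x \<and> limit_degree_ge A r d w})"

declare limit_degree_ge.simps(2) [simp del]

lemma limit_degree_ge_iso:
  assumes bij: "bij_betw f A B" and ord: "\<forall>x\<in>A. \<forall>y\<in>A. r x y \<longleftrightarrow> s (f x) (f y)"
  shows "x \<in> A \<Longrightarrow> limit_degree_ge B s d (f x) \<longleftrightarrow> limit_degree_ge A r d x"
proof (induction d arbitrary: x)
  case (Suc d)
  have inj: "inj_on f A" and B: "B = f ` A" using bij by (auto simp: bij_betw_def)
  have "infinite {w\<in>B. s (f z) w \<and> s w (f x) \<and> limit_degree_ge B s d w}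
    \<longleftrightarrow> infinite {w\<in>A. r z w \<and> r w x \<and> limit_degree_ge A r d w}" if "z \<in> A" for z
  proof -
    have "{w\<in>B. s (f z) w \<and> s w (f x) \<and> limit_degree_ge B s d w}
        = f ` {w\<in>A. r z w \<and> r w x \<and> limit_degree_ge A r d w}"
      using that Suc ord by (intro bij_betw_image_Collect[OF bij, symmetric]) auto
    moreover have "inj_on f {w\<in>A. r z w \<and> r w x \<and> limit_degree_ge A r d w}"
      using inj by (rule inj_on_subset) auto
    ultimately show ?thesis by (simp add: finite_image_iff)
  qed
  then show ?case
    using Suc.prems ord unfolding limit_degree_ge.simps(2) B by auto
qed simp

definition final_degree_points :: "'a set \<Rightarrow> ('a \<Rightarrow> 'a \<Rightarrow> bool) \<Rightarrow> nat \<Rightarrow> 'a \<Rightarrow> 'a set" where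
  "final_degree_points A r D y =
     {z\<in>A. r z y \<and> limit_degree_ge A r D z
        \<and> (\<forall>w\<in>A. r z w \<and> r w y \<longrightarrow> \<not> limit_degree_ge A r (Suc D) w)}"

lemma card_final_degree_points_iso:
  assumes bij: "bij_betw f A B" and ord: "\<forall>x\<in>A. \<forall>y\<in>A. r x y \<longleftrightarrow> s (f x) (f y)"
    and y: "y \<in> A"
  shows "card (final_degree_points B s D (f y)) = card (final_degree_points A r D y)"
proof -
  have inj: "inj_on f A" and B: "B = f ` A" using bij by (auto simp: bij_betw_def)
  note degree = limit_degree_ge_iso[OF bij ord]
  have "final_degree_points B s D (f y) = f ` final_degree_points A r D y"
    unfolding final_degree_points_def
    using y ord degree by (intro bij_betw_image_Collect[OF bij, symmetric]) (auto simp: B)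
  moreover have "inj_on f (final_degree_points A r D y)"
    using inj by (rule inj_on_subset) (auto simp: final_degree_points_def)
  ultimately show ?thesis by (simp add: card_image)
qed

definition drops_on_left :: "'a set \<Rightarrow> ('a \<Rightarrow> 'a \<Rightarrow> bool) \<Rightarrow> ('a \<Rightarrow> nat) \<Rightarrow> 'a \<Rightarrow> bool" where
  "drops_on_left A r \<beta> x \<longleftrightarrow> (\<exists>z\<in>A. r z x \<and> (\<forall>w\<in>A. r z w \<and> r w x \<longrightarrow> \<beta> w < \<beta> x))"

definition approached_from_left :: "'a set \<Rightarrow> ('a \<Rightarrow> 'a \<Rightarrow> bool) \<Rightarrow> ('a \<Rightarrow> nat) \<Rightarrow> 'a \<Rightarrow> bool" where
  "approached_from_left A r \<beta> x \<longleftrightarrow>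
     (\<exists>y::nat \<Rightarrow> 'a. inj y \<and> (\<forall>n. y n \<in> A \<and> r (y n) x \<and> \<beta> x \<le> Suc (\<beta> (y n)))
        \<and> (\<forall>z\<in>A. r z x \<longrightarrow> (\<forall>\<^sub>F n in sequentially. r z (y n))))"

lemma limit_degree_ge_imp_le:
  assumes drop: "\<And>x. x \<in> A \<Longrightarrow> drops_on_left A r \<beta> x"
  shows "x \<in> A \<Longrightarrow> limit_degree_ge A r d x \<Longrightarrow> d \<le> \<beta> x"
proof (induction d arbitrary: x)
  case (Suc d)
  obtain z where z: "z \<in> A" "r z x" and below: "\<forall>w\<in>A. r z w \<and> r w x \<longrightarrow> \<beta> w < \<beta> x"
    using drop[OF Suc.prems(1)] unfolding drops_on_left_def by blast
  have "infinite {w\<in>A. r z w \<and> r w x \<and> limit_degree_ge A r d w}"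
    using Suc.prems(2) z unfolding limit_degree_ge.simps(2) by blast
  then obtain w where "w \<in> A" "r z w" "r w x" "limit_degree_ge A r d w"
    using not_finite_existsD by blast
  then have "d \<le> \<beta> w" "\<beta> w < \<beta> x" using Suc.IH below by auto
  then show ?case by simp
qed simp

lemma le_imp_limit_degree_ge:
  assumes approach: "\<And>x. x \<in> A \<Longrightarrow> 1 \<le> \<beta> x \<Longrightarrow> approached_from_left A r \<beta> x"
  shows "x \<in> A \<Longrightarrow> d \<le> \<beta> x \<Longrightarrow> limit_degree_ge A r d x"
proof (induction d arbitrary: x)
  case (Suc d)
  obtain y :: "nat \<Rightarrow> 'a" where "inj y"
    and y: "\<And>n. y n \<in> A" "\<And>n. r (y n) x" "\<And>n. \<beta> x \<le> Suc (\<beta> (y n))"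
    and cofinal: "\<forall>z\<in>A. r z x \<longrightarrow> (\<forall>\<^sub>F n in sequentially. r z (y n))"
    using approach[OF Suc.prems(1)] Suc.prems(2) unfolding approached_from_left_def by auto
  show ?case unfolding limit_degree_ge.simps(2)
  proof (intro ballI impI)
    fix z assume "z \<in> A" "r z x"
    then obtain N where N: "\<And>n. n \<ge> N \<Longrightarrow> r z (y n)"
      using cofinal by (auto simp: eventually_sequentially)
    have "limit_degree_ge A r d (y n)" for n
      using Suc.IH[of "y n"] y(1,3)[of n] Suc.prems(2) by simp
    then have "y ` {N..} \<subseteq> {w\<in>A. r z w \<and> r w x \<and> limit_degree_ge A r d w}"
      using N y(1,2) by blast
    moreover have "infinite (y ` {N..})"
      using \<open>inj y\<close> by (metis finite_imageD infinite_Ici inj_on_subset subset_UNIV)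
    ultimately show "infinite {w\<in>A. r z w \<and> r w x \<and> limit_degree_ge A r d w}"
      using finite_subset by blast
  qed
qed simp

lemma scattered_if_wf_above:
  assumes total: "\<And>x y. x \<in> A \<Longrightarrow> y \<in> A \<Longrightarrow> x \<noteq> y \<Longrightarrow> r x y \<or> r y x"
    and wf_above: "\<And>a. a \<in> A \<Longrightarrow> wf {(w, z). w \<in> A \<and> z \<in> A \<and> r a w \<and> r w z}"
  shows "scattered A r"
  unfolding scattered_def
proof
  assume "\<exists>S\<subseteq>A. dense_suborder S r"
  then obtain S where "S \<subseteq> A" "infinite S"
    and dense: "\<And>x y. x \<in> S \<Longrightarrow> y \<in> S \<Longrightarrow> r x y \<Longrightarrow> \<exists>z\<in>S. r x z \<and> r z y"
    unfolding dense_suborder_def by blast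
  obtain x where "x \<in> S"
    using \<open>infinite S\<close> by (metis ex_in_conv finite.emptyI)
  moreover obtain y where "y \<in> S - {x}"
    using \<open>infinite S\<close> by (metis ex_in_conv finite.emptyI infinite_remove)
  ultimately obtain a b where ab: "a \<in> S" "b \<in> S" "r a b"
    using total \<open>S \<subseteq> A\<close> by blast
  then obtain z where z: "z \<in> {z\<in>S. r a z}"
    and least: "\<And>w. (w, z) \<in> {(w, z). w \<in> A \<and> z \<in> A \<and> r a w \<and> r w z} \<Longrightarrow> w \<notin> {z\<in>S. r a z}"
    using wfE_min[OF wf_above, of a b "{z\<in>S. r a z}"] \<open>S \<subseteq> A\<close> by blast
  then obtain w where "w \<in> S" "r a w" "r w z" using dense ab by blast
  then show False using least[of w] z \<open>S \<subseteq> A\<close> by auto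
qed

lemma Inl_in_Lcarrier [simp]:
  "Inl (k, c, xs) \<in> Lcarrier i \<longleftrightarrow> 1 \<le> k \<and> c < nat (- i) + k \<and> length xs = nat i + k"
  by (auto simp: Lcarrier_def)

lemma Inr_in_Lcarrier [simp]: "Inr (m, xs) \<in> Lcarrier i \<longleftrightarrow> length xs = m"
  by (auto simp: Lcarrier_def)

lemma Lless_total:
  assumes "x \<in> Lcarrier i" "y \<in> Lcarrier i" "x \<noteq> y"
  shows "Lless x y \<or> Lless y x"
proof (cases "(x, y)" rule: Lless.cases)
  case (1 k c xs k' c' xs')
  then show ?thesis using assms lexless_total[of xs xs'] by auto
next
  case (4 m xs m' xs')
  then show ?thesis using assms lexless_total[of xs xs'] by auto
qed auto

text \<open>Order-preserving on the points lying in summands \<open>k \<le> K\<close> or in \<open>\<omega>\<^sup>\<omega>\<close>: the summand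
  index runs backwards.\<close>

fun Lcode :: "nat \<Rightarrow> Lpt \<Rightarrow> nat \<times> nat \<times> nat \<times> nat list" where
  "Lcode K (Inl (k, c, xs)) = (0, K - k, c, xs)"
| "Lcode K (Inr (m, xs)) = (1, m, 0, xs)"

lemma Lcode_strict_mono:
  assumes "w \<in> Lcarrier i" "z \<in> Lcarrier i" "Lless w z"
    and "\<And>k c xs. w = Inl (k, c, xs) \<Longrightarrow> k \<le> K"
  shows "(Lcode K w, Lcode K z) \<in> less_than <*lex*> less_than <*lex*> less_than <*lex*> lex less_than"
  using assms by (cases "(w, z)" rule: Lless.cases) (auto simp: lexless_imp_lex)

lemma wf_Lless_above: "wf {(w, z). w \<in> Lcarrier i \<and> z \<in> Lcarrier i \<and> Lless a w \<and> Lless w z}"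
proof -
  obtain K where K: "\<And>k c xs. Lless a (Inl (k, c, xs)) \<Longrightarrow> k \<le> K"
  proof (cases a)
    case (Inl p)
    then obtain k0 c0 xs0 where "a = Inl (k0, c0, xs0)" by (cases p) auto
    then show ?thesis by (intro that[of k0]) auto
  qed (use that in auto)
  have wf: "wf (inv_image (less_than <*lex*> less_than <*lex*> less_than <*lex*> lex less_than) (Lcode K))"
    by auto
  have mono: "(Lcode K w, Lcode K z) \<in> less_than <*lex*> less_than <*lex*> less_than <*lex*> lex less_than"
    if "w \<in> Lcarrier i" "z \<in> Lcarrier i" "Lless a w" "Lless w z" for w z
    using that by (intro Lcode_strict_mono[of w i z]) (auto dest: K)
  show ?thesis
    by (rule wf_subset[OF wf]) (auto intro: mono)
qed

lemma scattered_Lcarrier: "scattered (Lcarrier i) Lless"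
  by (rule scattered_if_wf_above[OF Lless_total wf_Lless_above])

lemma Lless_asym: "Lless x y \<Longrightarrow> \<not> Lless y x"
  by (cases "(x, y)" rule: Lless.cases) (auto dest: lexless_asym)

text \<open>A point with a nonzero digit has as degree its number of trailing zeros; the left end of
  a block has the exponent of the block immediately to its left as degree.\<close>

fun Ldegree :: "int \<Rightarrow> Lpt \<Rightarrow> nat" where
  "Ldegree i (Inl (k, c, xs)) =
     (if all_zero xs then if c = 0 then length xs + 1 else length xs else trailing_zeros xs)"
| "Ldegree i (Inr (m, xs)) =
     (if all_zero xs then if m = 0 then nat i + 1 else m - 1 else trailing_zeros xs)"

text \<open>\<open>P\<close> embeds a copy of \<open>\<omega>\<^sup>e\<close> (lists of length \<open>e\<close>, ordered lexicographically) immediately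
  to the left of \<open>x\<close>.\<close>

definition ends_block :: "int \<Rightarrow> (nat list \<Rightarrow> Lpt) \<Rightarrow> nat \<Rightarrow> Lpt \<Rightarrow> bool" where
  "ends_block i P e x \<longleftrightarrow> inj P \<and> Ldegree i x = e
     \<and> (\<forall>ys. length ys = e \<longrightarrow> P ys \<in> Lcarrier i \<and> Lless (P ys) x
          \<and> (\<not> all_zero ys \<longrightarrow> Ldegree i (P ys) = trailing_zeros ys))
     \<and> (\<forall>ys ys'. length ys = e \<longrightarrow> length ys' = e \<longrightarrow> Lless (P ys) (P ys') \<longleftrightarrow> lexless ys ys')
     \<and> (\<forall>w\<in>Lcarrier i. Lless w x \<longrightarrow>
          (\<exists>ys. length ys = e \<and> w = P ys) \<or> (\<forall>ys. length ys = e \<longrightarrow> Lless w (P ys)))"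

lemma ends_blockD:
  assumes "ends_block i P e x"
  shows "inj P" and "Ldegree i x = e"
    and "\<And>ys. length ys = e \<Longrightarrow> P ys \<in> Lcarrier i"
    and "\<And>ys. length ys = e \<Longrightarrow> Lless (P ys) x"
    and "\<And>ys. length ys = e \<Longrightarrow> \<not> all_zero ys \<Longrightarrow> Ldegree i (P ys) = trailing_zeros ys"
    and "\<And>ys ys'. length ys = e \<Longrightarrow> length ys' = e \<Longrightarrow> Lless (P ys) (P ys') \<longleftrightarrow> lexless ys ys'"
    and "\<And>w. w \<in> Lcarrier i \<Longrightarrow> Lless w x \<Longrightarrow>
           (\<exists>ys. length ys = e \<and> w = P ys) \<or> (\<forall>ys. length ys = e \<longrightarrow> Lless w (P ys))"
  using assms unfolding ends_block_def by blast+

lemma ends_block_drops_on_left: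
  assumes "ends_block i P e x"
  shows "drops_on_left (Lcarrier i) Lless (Ldegree i) x"
proof -
  note block = ends_blockD[OF assms]
  let ?z = "P (replicate e 0)"
  have "Ldegree i w < Ldegree i x" if w: "w \<in> Lcarrier i" "Lless ?z w" "Lless w x" for w
  proof -
    obtain ys where ys: "length ys = e" "w = P ys"
      using block(7)[OF w(1,3)] w(2) Lless_asym by (metis length_replicate)
    then have "\<not> all_zero ys"
      using w(2) block(6) lexless_imp_not_all_zero by (metis length_replicate)
    then show ?thesis
      using ys block(2,5) trailing_zeros_less_length by fastforce
  qed
  moreover have "?z \<in> Lcarrier i" "Lless ?z x" using block(3,4) by simp_all
  ultimately show ?thesis unfolding drops_on_left_def by blast
qed

lemma ends_block_approached_from_left:
  assumes "ends_block i P e x" "1 \<le> e"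
  shows "approached_from_left (Lcarrier i) Lless (Ldegree i) x"
proof -
  note block = ends_blockD[OF assms(1)]
  obtain e' where e: "e = Suc e'" using assms(2) by (cases e) auto
  let ?y = "\<lambda>n. P (Suc n # replicate e' 0)"
  have "inj ?y" using block(1) by (auto simp: inj_def)
  moreover have "?y n \<in> Lcarrier i \<and> Lless (?y n) x \<and> Ldegree i x \<le> Suc (Ldegree i (?y n))" for n
    using block(2) block(3-5)[of "Suc n # replicate e' 0"] e
      trailing_zeros_append_Cons_replicate[of "Suc n" "[]" e'] by simp
  moreover have "\<forall>\<^sub>F n in sequentially. Lless w (?y n)" if "w \<in> Lcarrier i" "Lless w x" for w
    using block(7)[OF that]
  proof
    assume "\<exists>ys. length ys = e \<and> w = P ys"
    then obtain ys where ys: "length ys = e" "w = P ys" by blast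
    then have "\<forall>\<^sub>F n in sequentially. lexless ys (Suc n # replicate e' 0)"
      using e by (intro eventually_lexless_Suc_Cons) auto
    then show ?thesis
      using ys block(6) e by (simp add: eventually_mono)
  qed (use e in auto)
  ultimately show ?thesis unfolding approached_from_left_def by blast
qed

lemma ends_block_Inl_interior:
  assumes x: "x = Inl (k, c, pre @ Suc a # replicate t 0)" "x \<in> Lcarrier i"
  shows "ends_block i (\<lambda>ys. Inl (k, c, pre @ a # ys)) t x"
proof -
  have "(\<exists>ys. length ys = t \<and> w = Inl (k, c, pre @ a # ys))
      \<or> (\<forall>ys. length ys = t \<longrightarrow> Lless w (Inl (k, c, pre @ a # ys)))"
    if "w \<in> Lcarrier i" "Lless w x" for w
    using that x by (cases w) (auto dest!: lexless_below_Suc_cases)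
  then show ?thesis
    using x unfolding ends_block_def
    by (auto simp: inj_def lexless_append_Cons trailing_zeros_append_Cons_replicate
        trailing_zeros_append_Cons)
qed

lemma ends_block_Inr_interior:
  assumes x: "x = Inr (m, pre @ Suc a # replicate t 0)" "x \<in> Lcarrier i"
  shows "ends_block i (\<lambda>ys. Inr (m, pre @ a # ys)) t x"
proof -
  have "(\<exists>ys. length ys = t \<and> w = Inr (m, pre @ a # ys))
      \<or> (\<forall>ys. length ys = t \<longrightarrow> Lless w (Inr (m, pre @ a # ys)))"
    if "w \<in> Lcarrier i" "Lless w x" for w
    using that x by (cases w) (auto dest!: lexless_below_Suc_cases)
  then show ?thesis
    using x unfolding ends_block_def
    by (auto simp: inj_def lexless_append_Cons trailing_zeros_append_Cons_replicate
        trailing_zeros_append_Cons)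
qed

lemma ends_block_copy_start:
  assumes "Inl (k, Suc c, replicate e 0) \<in> Lcarrier i"
  shows "ends_block i (\<lambda>ys. Inl (k, c, ys)) e (Inl (k, Suc c, replicate e 0))"
proof -
  have "(\<exists>ys. length ys = e \<and> w = Inl (k, c, ys)) \<or> (\<forall>ys. length ys = e \<longrightarrow> Lless w (Inl (k, c, ys)))"
    if "w \<in> Lcarrier i" "Lless w (Inl (k, Suc c, replicate e 0))" for w
    using that assms by (cases w) (auto simp: less_Suc_eq)
  then show ?thesis
    using assms unfolding ends_block_def by (auto simp: inj_def)
qed

lemma ends_block_summand_start:
  assumes "Inl (k, 0, replicate e 0) \<in> Lcarrier i"
  shows "ends_block i (\<lambda>ys. Inl (Suc k, nat (- i) + k, ys)) (Suc e) (Inl (k, 0, replicate e 0))"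
proof -
  have "(\<exists>ys. length ys = Suc e \<and> w = Inl (Suc k, nat (- i) + k, ys))
      \<or> (\<forall>ys. length ys = Suc e \<longrightarrow> Lless w (Inl (Suc k, nat (- i) + k, ys)))"
    if "w \<in> Lcarrier i" "Lless w (Inl (k, 0, replicate e 0))" for w
    using that assms by (cases w) (auto simp: less_Suc_eq Suc_le_eq)
  then show ?thesis
    using assms unfolding ends_block_def by (auto simp: inj_def)
qed

lemma ends_block_power_start:
  "ends_block i (\<lambda>ys. Inr (m, ys)) m (Inr (Suc m, replicate (Suc m) 0))"
proof -
  have "(\<exists>ys. length ys = m \<and> w = Inr (m, ys)) \<or> (\<forall>ys. length ys = m \<longrightarrow> Lless w (Inr (m, ys)))"
    if "w \<in> Lcarrier i" "Lless w (Inr (Suc m, replicate (Suc m) 0))" for w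
    using that by (cases w) (auto simp: less_Suc_eq simp del: replicate_Suc)
  then show ?thesis
    unfolding ends_block_def by (auto simp: inj_def simp del: replicate_Suc)
qed

lemma ends_block_omega_omega_start:
  "ends_block i (\<lambda>ys. Inl (1, nat (- i), ys)) (nat i + 1) (Inr (0, []))"
proof -
  have "(\<exists>ys. length ys = nat i + 1 \<and> w = Inl (1, nat (- i), ys))
      \<or> (\<forall>ys. length ys = nat i + 1 \<longrightarrow> Lless w (Inl (1, nat (- i), ys)))"
    if "w \<in> Lcarrier i" "Lless w (Inr (0, []))" for w
    using that by (cases w) (auto simp: less_Suc_eq)
  then show ?thesis
    unfolding ends_block_def by (auto simp: inj_def)
qed

lemma Lcarrier_ends_block:
  assumes "x \<in> Lcarrier i"
  shows "\<exists>P e. ends_block i P e x"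
proof (cases x)
  case (Inl p)
  then obtain k c xs where x: "x = Inl (k, c, xs)" by (cases p) auto
  show ?thesis
  proof (cases "all_zero xs")
    case True
    then have "x = Inl (k, c, replicate (length xs) 0)" using x all_zero_eq_replicate by metis
    then show ?thesis
      using assms ends_block_summand_start ends_block_copy_start by (cases c) metis+
  next
    case False
    then obtain pre a t where "xs = pre @ Suc a # replicate t 0"
      by (metis not_all_zero_decomp not0_implies_Suc)
    then show ?thesis using ends_block_Inl_interior assms x by blast
  qed
next
  case (Inr p)
  then obtain m xs where x: "x = Inr (m, xs)" by (cases p) auto
  show ?thesis
  proof (cases "all_zero xs")
    case True
    then have "x = Inr (m, replicate m 0)" using x all_zero_eq_replicate assms by fastforce
    then show ?thesis
      using ends_block_omega_omega_start ends_block_power_start by (cases m) (metis replicate_0)+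
  next
    case False
    then obtain pre a t where "xs = pre @ Suc a # replicate t 0"
      by (metis not_all_zero_decomp not0_implies_Suc)
    then show ?thesis using ends_block_Inr_interior assms x by blast
  qed
qed

lemma limit_degree_ge_Lcarrier_iff:
  assumes "x \<in> Lcarrier i"
  shows "limit_degree_ge (Lcarrier i) Lless d x \<longleftrightarrow> d \<le> Ldegree i x"
proof -
  have "drops_on_left (Lcarrier i) Lless (Ldegree i) x" if "x \<in> Lcarrier i" for x
    using Lcarrier_ends_block[OF that] ends_block_drops_on_left by blast
  moreover have "approached_from_left (Lcarrier i) Lless (Ldegree i) x"
    if "x \<in> Lcarrier i" "1 \<le> Ldegree i x" for x
    using Lcarrier_ends_block[OF that(1)] ends_block_approached_from_left ends_blockD(2) that(2)
    by metis
  ultimately show ?thesis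
    using limit_degree_ge_imp_le le_imp_limit_degree_ge assms by metis
qed

lemma final_degree_points_Lcarrier_iff:
  "z \<in> final_degree_points (Lcarrier i) Lless D y \<longleftrightarrow>
     z \<in> Lcarrier i \<and> Lless z y \<and> D \<le> Ldegree i z
     \<and> (\<forall>w\<in>Lcarrier i. Lless z w \<and> Lless w y \<longrightarrow> Ldegree i w \<le> D)"
  by (auto simp: final_degree_points_def limit_degree_ge_Lcarrier_iff not_less_eq_eq[symmetric])

lemma Ldegree_Inl_le:
  assumes "Inl (k, c, xs) \<in> Lcarrier i"
  shows "Ldegree i (Inl (k, c, xs)) \<le> nat i + k + 1"
    and "c \<noteq> 0 \<or> \<not> all_zero xs \<Longrightarrow> Ldegree i (Inl (k, c, xs)) \<le> nat i + k"
    and "\<not> all_zero xs \<Longrightarrow> Ldegree i (Inl (k, c, xs)) < nat i + k"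
  using assms trailing_zeros_less_length[of xs] by auto

lemma Ldegree_Inr_le: "Inr (m, xs) \<in> Lcarrier i \<Longrightarrow> Ldegree i (Inr (m, xs)) \<le> m + nat i + 1"
  using trailing_zeros_less_length[of xs] by auto

definition left_ends :: "int \<Rightarrow> nat \<Rightarrow> Lpt set" where
  "left_ends i K = insert (Inl (K - 1, 0, replicate (nat i + (K - 1)) 0))
     ((\<lambda>c. Inl (K, c, replicate (nat i + K) 0)) ` {..<nat (- i) + K})"

lemma card_left_ends:
  assumes "2 \<le> K"
  shows "card (left_ends i K) = nat (- i) + K + 1"
proof -
  let ?f = "\<lambda>c. Inl (K, c, replicate (nat i + K) 0) :: Lpt"
  have "inj_on ?f {..<nat (- i) + K}" by (auto simp: inj_on_def)
  moreover have "Inl (K - 1, 0, replicate (nat i + (K - 1)) 0) \<notin> ?f ` {..<nat (- i) + K}"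
    using assms by auto
  ultimately show ?thesis by (simp add: left_ends_def card_image)
qed

lemma final_degree_points_Lcarrier_summand:
  assumes K: "2 \<le> K" and Inl_below: "\<And>k c xs. K - 1 \<le> k \<Longrightarrow> Lless (Inl (k, c, xs)) y"
    and Inr_below: "\<And>m xs. Lless (Inr (m, xs)) y \<Longrightarrow> m + 2 \<le> K"
    and "z \<in> final_degree_points (Lcarrier i) Lless (nat i + K) y"
  obtains k c zs where "z = Inl (k, c, zs)" "K - 1 \<le> k" "k \<le> K"
proof -
  have z: "z \<in> Lcarrier i" "Lless z y" "nat i + K \<le> Ldegree i z"
    and gap: "\<And>w. w \<in> Lcarrier i \<Longrightarrow> Lless z w \<Longrightarrow> Lless w y \<Longrightarrow> Ldegree i w \<le> nat i + K"
    using assms(4) by (auto simp: final_degree_points_Lcarrier_iff)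
  show ?thesis
  proof (cases z)
    case (Inr p)
    then obtain m zs where zm: "z = Inr (m, zs)" by (cases p) auto
    have "m + 2 \<le> K" using Inr_below z(2) zm by blast
    moreover have "Ldegree i z \<le> m + nat i + 1" using Ldegree_Inr_le z(1) zm by blast
    ultimately show ?thesis using z(3) by linarith
  next
    case (Inl p)
    then obtain k c zs where zk: "z = Inl (k, c, zs)" by (cases p) auto
    have "k \<le> K"
    proof (rule ccontr)
      assume "\<not> k \<le> K"
      let ?w = "Inl (K, 0, replicate (nat i + K) 0)"
      have "?w \<in> Lcarrier i" "Lless z ?w" "Lless ?w y" using K Inl_below zk \<open>\<not> k \<le> K\<close> by auto
      then have "Ldegree i ?w \<le> nat i + K" by (rule gap)
      then show False by simp
    qed
    moreover have "Ldegree i z \<le> nat i + k + 1" using Ldegree_Inl_le(1) z(1) zk by blast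
    then have "K - 1 \<le> k" using z(3) by linarith
    ultimately show ?thesis using zk that by blast
  qed
qed

lemma final_degree_points_Lcarrier_subset:
  assumes K: "2 \<le> K" and Inl_below: "\<And>k c xs. K - 1 \<le> k \<Longrightarrow> Lless (Inl (k, c, xs)) y"
    and Inr_below: "\<And>m xs. Lless (Inr (m, xs)) y \<Longrightarrow> m + 2 \<le> K"
  shows "final_degree_points (Lcarrier i) Lless (nat i + K) y \<subseteq> left_ends i K"
proof
  fix z assume z_final: "z \<in> final_degree_points (Lcarrier i) Lless (nat i + K) y"
  obtain k c zs where zk: "z = Inl (k, c, zs)" and "K - 1 \<le> k" "k \<le> K"
    by (rule final_degree_points_Lcarrier_summand[OF K Inl_below Inr_below z_final])
  then consider "k = K" | "k = K - 1" by linarith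
  moreover have z: "z \<in> Lcarrier i" "nat i + K \<le> Ldegree i z"
    using z_final by (auto simp: final_degree_points_Lcarrier_iff)
  then have len: "length zs = nat i + k" "c < nat (- i) + k" using zk by auto
  ultimately show "z \<in> left_ends i K"
  proof cases
    case 1
    then have "all_zero zs" using Ldegree_Inl_le(3)[of k c zs i] z zk by fastforce
    then have "zs = replicate (nat i + K) 0" using all_zero_eq_replicate len(1) 1 by metis
    then show ?thesis using zk 1 len(2) unfolding left_ends_def by auto
  next
    case 2
    then have "c = 0 \<and> all_zero zs" using Ldegree_Inl_le(2)[of k c zs i] z zk K by fastforce
    then have "c = 0" "zs = replicate (nat i + (K - 1)) 0"
      using all_zero_eq_replicate len(1) 2 by metis+
    then show ?thesis using zk 2 unfolding left_ends_def by auto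
  qed
qed

lemma final_degree_points_Lcarrier_supset:
  assumes K: "2 \<le> K" and Inl_below: "\<And>k c xs. K - 1 \<le> k \<Longrightarrow> Lless (Inl (k, c, xs)) y"
    and Inr_below: "\<And>m xs. Lless (Inr (m, xs)) y \<Longrightarrow> m + 2 \<le> K"
  shows "left_ends i K \<subseteq> final_degree_points (Lcarrier i) Lless (nat i + K) y"
proof
  fix z assume "z \<in> left_ends i K"
  then obtain kz cz where z: "z = Inl (kz, cz, replicate (nat i + kz) 0)" "K - 1 \<le> kz" "kz \<le> K"
    and deg_z: "nat i + K \<le> Ldegree i z" and "z \<in> Lcarrier i"
    using K unfolding left_ends_def by auto
  have "Ldegree i w \<le> nat i + K" if w: "w \<in> Lcarrier i" "Lless z w" "Lless w y" for w
  proof (cases w)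
    case (Inr p)
    then obtain m ws where "w = Inr (m, ws)" by (cases p) auto
    then show ?thesis using w Inr_below Ldegree_Inr_le[of m ws i] by fastforce
  next
    case (Inl p)
    then obtain k c ws where wk: "w = Inl (k, c, ws)" by (cases p) auto
    then have "k < kz \<or> (k = kz \<and> (c \<noteq> 0 \<or> \<not> all_zero ws))"
      using w(2) z(1) lexless_imp_not_all_zero by auto
    then show ?thesis
      using Ldegree_Inl_le(1,2)[of k c ws i] w(1) wk z(3) by fastforce
  qed
  then show "z \<in> final_degree_points (Lcarrier i) Lless (nat i + K) y"
    using \<open>z \<in> Lcarrier i\<close> Inl_below z(1,2) deg_z by (auto simp: final_degree_points_Lcarrier_iff)
qed

lemma card_final_degree_points_Lcarrier:
  assumes "y \<in> Lcarrier i"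
  shows "\<forall>\<^sub>F D in sequentially. int (card (final_degree_points (Lcarrier i) Lless D y)) = int D + 1 - i"
proof -
  obtain K0 where Inl_below: "\<And>k c xs. K0 \<le> k \<Longrightarrow> Lless (Inl (k, c, xs)) y"
    and Inr_below: "\<And>m xs. Lless (Inr (m, xs)) y \<Longrightarrow> m < K0"
  proof (cases y)
    case (Inl p)
    then obtain ky cy ys where "y = Inl (ky, cy, ys)" by (cases p) auto
    then show ?thesis by (intro that[of "Suc ky"]) auto
  next
    case (Inr p)
    then obtain my ys where "y = Inr (my, ys)" by (cases p) auto
    then show ?thesis by (intro that[of "Suc my"]) auto
  qed
  have "int (card (final_degree_points (Lcarrier i) Lless D y)) = int D + 1 - i"
    if "nat i + K0 + 2 \<le> D" for D
  proof -
    define K where "K = D - nat i"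
    have K: "2 \<le> K" "\<And>k c xs. K - 1 \<le> k \<Longrightarrow> Lless (Inl (k, c, xs)) y"
      "\<And>m xs. Lless (Inr (m, xs)) y \<Longrightarrow> m + 2 \<le> K"
      using that Inl_below Inr_below unfolding K_def by (auto simp: Suc_le_eq dest!: Inr_below)
    have D: "D = nat i + K" using that unfolding K_def by simp
    have "final_degree_points (Lcarrier i) Lless D y = left_ends i K"
      unfolding D using K
      by (intro subset_antisym final_degree_points_Lcarrier_subset final_degree_points_Lcarrier_supset)
    then show ?thesis using card_left_ends[OF K(1)] D by auto
  qed
  then show ?thesis by (auto simp: eventually_sequentially)
qed

theorem mainTheorem3:
  shows "(\<forall>i j :: int. i \<noteq> j \<longrightarrow> \<not> order_iso (Lcarrier i) Lless (Lcarrier j) Lless)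
         \<and> (\<forall>i :: int. scattered (Lcarrier i) Lless)"
proof (intro conjI allI impI notI)
  fix i j :: int
  assume "i \<noteq> j" and "order_iso (Lcarrier i) Lless (Lcarrier j) Lless"
  then obtain f where bij: "bij_betw f (Lcarrier i) (Lcarrier j)"
    and ord: "\<forall>x\<in>Lcarrier i. \<forall>y\<in>Lcarrier i. Lless x y \<longleftrightarrow> Lless (f x) (f y)"
    unfolding order_iso_def by blast
  let ?y = "Inr (0, []) :: Lpt"
  have y: "?y \<in> Lcarrier i" by simp
  then have fy: "f ?y \<in> Lcarrier j" using bij bij_betwE by blast
  have "\<forall>\<^sub>F D in sequentially. int D + 1 - i = int D + 1 - j"
    using card_final_degree_points_Lcarrier[OF y] card_final_degree_points_Lcarrier[OF fy]
    by eventually_elim (simp add: card_final_degree_points_iso[OF bij ord y])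
  then show False using \<open>i \<noteq> j\<close> by simp
next
  show "scattered (Lcarrier i) Lless" for i
    by (rule scattered_Lcarrier)
qed

end
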